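(* Let $G$ be a loop-less digraph on $n$ vertices in which every vertex has in-degree at least $1$, and let $\mathring{G}$ be the digraph obtained from $G$ by adding a loop on every vertex. Then $\mathring{G}$ admits a boolean nilpotent function of class at most $4$. Moreover, if $G$ is symmetric or has a vertex of out-degree $n-1$, then $\mathring{G}$ admits a boolean nilpotent function of class at most $3$.
   Context: A digraph is symmetric if for every arc $(u,v)$, $(v,u)$ is also an arc. A boolean function on $[n]$ is a map $f:\{0,1\}^n\to\{0,1\}^n$; its (unsigned) interaction graph has an arc $(j,i)$ iff $f_i$ depends essentially on $x_j$, i.e. $f_i(a)\neq f_i(b)$ for some $a,b$ differing only in coordinate $j$ (loops included). A digraph $H$ on $[n]$ admits $f$ if the interaction graph of $f$ equals $H$. $f$ is nilpotent if $f^k$ is constant for some $k\geq 0$ ($f^0=\mathrm{id}$); the least such $k$ is its class. *)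

theory Defs
  imports Main
begin

(* Vertices are the elements of a finite type 'n (so n = CARD('n)); a digraph is a set of arcs
   ('n \<times> 'n) set; a boolean function on the vertex set is a map ('n \<Rightarrow> bool) \<Rightarrow> ('n \<Rightarrow> bool). *)

definition interaction_graph :: "(('n \<Rightarrow> bool) \<Rightarrow> ('n \<Rightarrow> bool)) \<Rightarrow> ('n \<times> 'n) set" where
  "interaction_graph f = {(j, i). \<exists>x. f x i \<noteq> f (x(j := \<not> x j)) i}"

definition admits :: "('n \<times> 'n) set \<Rightarrow> (('n \<Rightarrow> bool) \<Rightarrow> ('n \<Rightarrow> bool)) \<Rightarrow> bool" where
  "admits H f \<longleftrightarrow> interaction_graph f = H"

definition nilpotent_class_le :: "(('n \<Rightarrow> bool) \<Rightarrow> ('n \<Rightarrow> bool)) \<Rightarrow> nat \<Rightarrow> bool" where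
  "nilpotent_class_le f k \<longleftrightarrow> (\<exists>m\<le>k. \<exists>c. \<forall>x. (f ^^ m) x = c)"

definition add_loops :: "('n \<times> 'n) set \<Rightarrow> ('n \<times> 'n) set" where
  "add_loops G = G \<union> Id"

end

theory Submission
  imports Defs
begin

text \<open>Colour the vertices with \<open>C0, C1, C2\<close> so that every \<open>C0\<close>-vertex has an in-neighbour
  of nonzero colour, every \<open>C1\<close>-vertex a \<open>C0\<close>-in-neighbour and every \<open>C2\<close>-vertex a
  \<open>C1\<close>-in-neighbour. Such a colouring exists as soon as every vertex has an in-neighbour: delete
  a vertex if the rest still has this property; otherwise the graph is a disjoint union of
  cycles, and a 2-cycle, a 3-cycle, or a cycle with two consecutive vertices contracted away
  can be split off. Colour \<open>C2\<close> is only needed for the last two, which do not occur in symmetric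
  graphs, and a vertex dominating all others can be coloured \<open>C0\<close> with all others \<open>C1\<close>.

  Given the colouring, let every vertex of nonzero colour switch on for good as soon as an
  in-neighbour shows its final value, and every \<open>C0\<close>-vertex be on only if it and all its
  in-neighbours are off. The interaction graph is \<open>G\<close> plus loops; nonzero vertices are on
  after three steps (two without \<open>C2\<close>), and one step later every \<open>C0\<close>-vertex is off.\<close>

datatype colour = C0 | C1 | C2

fun feeds :: "colour \<Rightarrow> colour \<Rightarrow> bool" where
  "feeds a C0 \<longleftrightarrow> a \<noteq> C0"
| "feeds a C1 \<longleftrightarrow> a = C0"
| "feeds a C2 \<longleftrightarrow> a = C1"

definition has_in_neighbours :: "'a set \<Rightarrow> ('a \<times> 'a) set \<Rightarrow> bool" where
  "has_in_neighbours V E \<longleftrightarrow> (\<forall>i\<in>V. \<exists>j\<in>V. j \<noteq> i \<and> (j, i) \<in> E)"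

definition admissible_colouring :: "'a set \<Rightarrow> ('a \<times> 'a) set \<Rightarrow> ('a \<Rightarrow> colour) \<Rightarrow> bool" where
  "admissible_colouring V E c \<longleftrightarrow> (\<forall>i\<in>V. \<exists>j\<in>V. (j, i) \<in> E \<and> feeds (c j) (c i))"

lemma admissible_colouring_extend:
  assumes "admissible_colouring V E c"
    and "\<forall>i\<in>W. \<exists>j\<in>V \<union> W. (j, i) \<in> E \<and> feeds (c' j) (c' i)"
    and "\<forall>i\<in>V. c' i = c i"
  shows "admissible_colouring (V \<union> W) E c'"
  using assms unfolding admissible_colouring_def by (metis UnCI UnE)

lemma admissible_colouring_insert:
  assumes "admissible_colouring V E c" and "u \<in> V" "v \<notin> V" "(u, v) \<in> E"
  shows "admissible_colouring (insert v V) E (c(v := if c u = C0 then C1 else C0))"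
proof -
  have "admissible_colouring (V \<union> {v}) E (c(v := if c u = C0 then C1 else C0))"
    by (rule admissible_colouring_extend[OF assms(1)]) (use assms in auto)
  then show ?thesis by simp
qed

lemma admissible_colouring_add_2_cycle:
  assumes "admissible_colouring V E c" and "u \<notin> V" "v \<notin> V" "u \<noteq> v"
    and "(u, v) \<in> E" "(v, u) \<in> E"
  shows "admissible_colouring (V \<union> {u, v}) E (c(u := C0, v := C1))"
  by (rule admissible_colouring_extend[OF assms(1)]) (use assms in auto)

lemma admissible_colouring_add_3_cycle:
  assumes "admissible_colouring V E c" and "t \<notin> V" "u \<notin> V" "v \<notin> V"
    and "t \<noteq> u" "t \<noteq> v" "u \<noteq> v"
    and "(v, t) \<in> E" "(t, u) \<in> E" "(u, v) \<in> E"
  shows "admissible_colouring (V \<union> {t, u, v}) E (c(t := C0, u := C1, v := C2))"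
  by (rule admissible_colouring_extend[OF assms(1)]) (use assms in auto)

text \<open>Replacing the arc \<open>(u, x)\<close> by a path \<open>u \<rightarrow> v \<rightarrow> w \<rightarrow> x\<close>:
  whatever the colours of \<open>u\<close> and \<open>x\<close>, two intermediate colours in \<open>{C0, C1}\<close> suffice.\<close>
lemma admissible_colouring_subdivide:
  assumes c: "admissible_colouring V (insert (u, x) E) c"
    and "u \<in> V" "v \<notin> V" "w \<notin> V" "v \<noteq> w"
    and "(u, v) \<in> E" "(v, w) \<in> E" "(w, x) \<in> E"
  shows "admissible_colouring (V \<union> {v, w}) E
           (c(v := if c u = C0 then C1 else C0, w := if c u = C0 then C0 else C1))"
    (is "admissible_colouring _ _ ?c")
proof -
  have "\<exists>j\<in>V \<union> {v, w}. (j, i) \<in> E \<and> feeds (?c j) (?c i)" if "i \<in> V" for i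
  proof -
    obtain j where j: "j \<in> V" "(j, i) \<in> insert (u, x) E" "feeds (c j) (c i)"
      using c \<open>i \<in> V\<close> unfolding admissible_colouring_def by blast
    show ?thesis
    proof (cases "(j, i) \<in> E")
      case True
      then show ?thesis using j assms by auto
    next
      case False
      then have "j = u" "i = x" using j(2) by auto
      then have "feeds (?c w) (?c i)" using j(3) assms \<open>i \<in> V\<close> by (cases "c u"; cases "c x") auto
      then show ?thesis using assms \<open>i = x\<close> by auto
    qed
  qed
  moreover have "\<forall>i\<in>{v, w}. \<exists>j\<in>V \<union> {v, w}. (j, i) \<in> E \<and> feeds (?c j) (?c i)"
    using assms by auto
  ultimately show ?thesis unfolding admissible_colouring_def by blast
qed

text \<open>If no vertex can be deleted, every vertex \<open>v\<close> is the only in-neighbour of some vertex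
  \<open>s v\<close>; such an \<open>s\<close> is injective, hence a permutation of \<open>V\<close>, so every in-neighbourhood is
  a singleton.\<close>
lemma unique_in_neighbour_if_minimal:
  assumes fin: "finite V" and E: "has_in_neighbours V E"
    and minimal: "\<forall>v\<in>V. \<not> has_in_neighbours (V - {v}) E"
  shows "\<exists>q. inj_on q V \<and> (\<forall>i\<in>V. {j\<in>V. j \<noteq> i \<and> (j, i) \<in> E} = {q i})"
proof -
  have "\<forall>v\<in>V. \<exists>i. i \<in> V \<and> {j\<in>V. j \<noteq> i \<and> (j, i) \<in> E} = {v}"
  proof
    fix v assume "v \<in> V"
    obtain i where i: "i \<in> V" "i \<noteq> v" "\<forall>j\<in>V - {v}. j \<noteq> i \<longrightarrow> (j, i) \<notin> E"
      using minimal \<open>v \<in> V\<close> unfolding has_in_neighbours_def by blast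
    then have "{j\<in>V. j \<noteq> i \<and> (j, i) \<in> E} \<subseteq> {v}" by blast
    moreover have "{j\<in>V. j \<noteq> i \<and> (j, i) \<in> E} \<noteq> {}"
      using E \<open>i \<in> V\<close> unfolding has_in_neighbours_def by blast
    ultimately show "\<exists>i. i \<in> V \<and> {j\<in>V. j \<noteq> i \<and> (j, i) \<in> E} = {v}" using i by blast
  qed
  then obtain s where s: "\<forall>v\<in>V. s v \<in> V \<and> {j\<in>V. j \<noteq> s v \<and> (j, s v) \<in> E} = {v}"
    by (auto dest: bchoice)
  then have s_in: "\<And>v. v \<in> V \<Longrightarrow> s v \<in> V"
    and s_nbhd: "\<And>v. v \<in> V \<Longrightarrow> {j\<in>V. j \<noteq> s v \<and> (j, s v) \<in> E} = {v}"
    by blast+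
  have inj: "inj_on s V"
  proof (rule inj_onI)
    fix a b assume "a \<in> V" "b \<in> V" "s a = s b"
    have "{a} = {j\<in>V. j \<noteq> s a \<and> (j, s a) \<in> E}" using s_nbhd[OF \<open>a \<in> V\<close>] by (rule sym)
    also have "\<dots> = {b}" unfolding \<open>s a = s b\<close> by (rule s_nbhd[OF \<open>b \<in> V\<close>])
    finally show "a = b" by simp
  qed
  then have surj: "s ` V = V"
    using s_in fin by (intro endo_inj_surj) auto
  have "{j\<in>V. j \<noteq> i \<and> (j, i) \<in> E} = {the_inv_into V s i}" if "i \<in> V" for i
  proof -
    obtain v where "v \<in> V" "i = s v" using surj \<open>i \<in> V\<close> by blast
    then show ?thesis using s_nbhd inj by (simp add: the_inv_into_f_f)
  qed
  moreover have "inj_on (the_inv_into V s) V"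
    using inj_on_the_inv_into[OF inj] surj by simp
  ultimately show ?thesis by blast
qed

text \<open>Within \<open>V\<close>, \<open>E\<close> is a disjoint union of directed cycles \<open>q i \<rightarrow> i\<close>.\<close>
locale unique_in_neighbours =
  fixes V :: "'a set" and E :: "('a \<times> 'a) set" and q :: "'a \<Rightarrow> 'a"
  assumes inj: "inj_on q V"
    and in_neighbours: "\<forall>i\<in>V. {j\<in>V. j \<noteq> i \<and> (j, i) \<in> E} = {q i}"
begin

lemma q_in: "i \<in> V \<Longrightarrow> q i \<in> V"
  and q_neq: "i \<in> V \<Longrightarrow> q i \<noteq> i"
  and q_arc: "i \<in> V \<Longrightarrow> (q i, i) \<in> E"
  using in_neighbours by blast+

lemma q_eq_iff: "i \<in> V \<Longrightarrow> j \<in> V \<Longrightarrow> q i = q j \<longleftrightarrow> i = j"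
  using inj by (auto dest: inj_onD)

lemma has_in_neighbours_Diff:
  assumes "\<forall>i\<in>V - W. q i \<notin> W"
  shows "has_in_neighbours (V - W) E"
  unfolding has_in_neighbours_def
proof
  fix i assume "i \<in> V - W"
  then show "\<exists>j\<in>V - W. j \<noteq> i \<and> (j, i) \<in> E"
    using assms q_in q_neq q_arc by (intro bexI[of _ "q i"]) auto
qed

lemma sym_imp_q_q:
  assumes "sym E" "i \<in> V"
  shows "q (q i) = i"
proof -
  have "i \<in> {j\<in>V. j \<noteq> q i \<and> (j, q i) \<in> E}"
    using assms q_arc[of i] q_neq[of i] by (auto dest: symD)
  then show ?thesis using in_neighbours q_in[OF \<open>i \<in> V\<close>] by auto
qed

lemma has_in_neighbours_bypass:
  assumes v: "v \<in> V" and qq: "q (q v) \<noteq> v" and qqq: "q (q (q v)) \<noteq> v"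
  shows "has_in_neighbours (V - {q (q v), q v}) (insert (q (q (q v)), v) E)"
  unfolding has_in_neighbours_def
proof
  fix i assume i: "i \<in> V - {q (q v), q v}"
  show "\<exists>j\<in>V - {q (q v), q v}. j \<noteq> i \<and> (j, i) \<in> insert (q (q (q v)), v) E"
  proof (cases "i = v")
    case True
    have "q (q (q v)) \<in> V - {q (q v), q v}"
      using v qq by (simp add: q_in q_neq q_eq_iff)
    then show ?thesis using True qqq by auto
  next
    case False
    then have "q i \<in> V - {q (q v), q v}" using v i by (simp add: q_in q_eq_iff)
    then show ?thesis using i q_neq q_arc by blast
  qed
qed

lemma admissible_colouring_2_cycle:
  assumes v: "v \<in> V" and qq: "q (q v) = v"
    and c: "admissible_colouring (V - {q v, v}) E c"
  shows "admissible_colouring V E (c(q v := C0, v := C1))"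
proof -
  have "(v, q v) \<in> E" using q_arc[OF q_in[OF v]] qq by simp
  then have "admissible_colouring (V - {q v, v} \<union> {q v, v}) E (c(q v := C0, v := C1))"
    using v q_neq q_arc by (intro admissible_colouring_add_2_cycle[OF c]) auto
  moreover have "V - {q v, v} \<union> {q v, v} = V" using v q_in by auto
  ultimately show ?thesis by simp
qed

lemma admissible_colouring_3_cycle:
  assumes v: "v \<in> V" and qqq: "q (q (q v)) = v" and qq: "q (q v) \<noteq> v"
    and c: "admissible_colouring (V - {q (q v), q v, v}) E c"
  shows "admissible_colouring V E (c(q (q v) := C0, q v := C1, v := C2))"
proof -
  have "(v, q (q v)) \<in> E" using q_arc[OF q_in[OF q_in[OF v]]] qqq by simp
  then have "admissible_colouring (V - {q (q v), q v, v} \<union> {q (q v), q v, v}) E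
      (c(q (q v) := C0, q v := C1, v := C2))"
    using v qq q_in q_neq q_arc by (intro admissible_colouring_add_3_cycle[OF c]) auto
  moreover have "V - {q (q v), q v, v} \<union> {q (q v), q v, v} = V" using v q_in by auto
  ultimately show ?thesis by simp
qed

lemma admissible_colouring_long_cycle:
  assumes v: "v \<in> V" and qq: "q (q v) \<noteq> v"
    and c: "admissible_colouring (V - {q (q v), q v}) (insert (q (q (q v)), v) E) c"
  shows "\<exists>c'. admissible_colouring V E c'"
proof -
  have "admissible_colouring (V - {q (q v), q v} \<union> {q (q v), q v}) E
      (c(q (q v) := if c (q (q (q v))) = C0 then C1 else C0,
         q v := if c (q (q (q v))) = C0 then C0 else C1))"
  proof (rule admissible_colouring_subdivide[OF c])
    show "q (q (q v)) \<in> V - {q (q v), q v}"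
      using v qq by (simp add: q_in q_neq q_eq_iff)
  qed (use v q_in q_neq q_arc in auto)
  moreover have "V - {q (q v), q v} \<union> {q (q v), q v} = V" using v q_in by auto
  ultimately show ?thesis by auto
qed

lemma admissible_colouring_from_smaller:
  assumes IH: "\<And>W F. W \<subset> V \<Longrightarrow> has_in_neighbours W F
      \<Longrightarrow> \<exists>c. admissible_colouring W F c \<and> (sym F \<longrightarrow> (\<forall>i\<in>W. c i \<noteq> C2))"
    and v: "v \<in> V"
  shows "\<exists>c. admissible_colouring V E c \<and> (sym E \<longrightarrow> (\<forall>i\<in>V. c i \<noteq> C2))"
proof (cases "q (q v) = v")
  case True
  have "has_in_neighbours (V - {q v, v}) E"
    using True v by (intro has_in_neighbours_Diff) (auto simp: q_in q_eq_iff)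
  moreover have "V - {q v, v} \<subset> V" using v by blast
  ultimately obtain c where c: "admissible_colouring (V - {q v, v}) E c"
    and sym: "sym E \<longrightarrow> (\<forall>i\<in>V - {q v, v}. c i \<noteq> C2)"
    using IH by blast
  moreover have "sym E \<longrightarrow> (\<forall>i\<in>V. (c(q v := C0, v := C1)) i \<noteq> C2)" using sym by auto
  ultimately show ?thesis using admissible_colouring_2_cycle[OF v True c] by blast
next
  case not_2_cycle: False
  then have not_sym: "\<not> sym E" using sym_imp_q_q v by blast
  show ?thesis
  proof (cases "q (q (q v)) = v")
    case True
    have "has_in_neighbours (V - {q (q v), q v, v}) E"
      using True v by (intro has_in_neighbours_Diff) (auto simp: q_in q_eq_iff)
    moreover have "V - {q (q v), q v, v} \<subset> V" using v by blast
    ultimately obtain c where "admissible_colouring (V - {q (q v), q v, v}) E c"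
      using IH by blast
    then show ?thesis
      using admissible_colouring_3_cycle[OF v True not_2_cycle] not_sym by blast
  next
    case long: False
    have "has_in_neighbours (V - {q (q v), q v}) (insert (q (q (q v)), v) E)"
      using v not_2_cycle long by (rule has_in_neighbours_bypass)
    moreover have "V - {q (q v), q v} \<subset> V" using q_in[OF v] by blast
    ultimately obtain c where "admissible_colouring (V - {q (q v), q v}) (insert (q (q (q v)), v) E) c"
      using IH by blast
    then show ?thesis
      using admissible_colouring_long_cycle[OF v not_2_cycle] not_sym by blast
  qed
qed

end

lemma admissible_colouring_exists:
  assumes "finite V" "has_in_neighbours V E"
  shows "\<exists>c. admissible_colouring V E c \<and> (sym E \<longrightarrow> (\<forall>i\<in>V. c i \<noteq> C2))"
  using assms
proof (induction V arbitrary: E rule: finite_psubset_induct)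
  case (psubset V)
  show ?case
  proof (cases "\<exists>v\<in>V. has_in_neighbours (V - {v}) E")
    case True
    then obtain v where v: "v \<in> V" "has_in_neighbours (V - {v}) E" by blast
    then obtain c where c: "admissible_colouring (V - {v}) E c"
      and sym: "sym E \<longrightarrow> (\<forall>i\<in>V - {v}. c i \<noteq> C2)"
      using psubset.IH[of "V - {v}"] by blast
    obtain u where "u \<in> V - {v}" "(u, v) \<in> E"
      using psubset.prems v(1) unfolding has_in_neighbours_def by blast
    then have "admissible_colouring (insert v (V - {v})) E (c(v := if c u = C0 then C1 else C0))"
      by (intro admissible_colouring_insert[OF c]) auto
    moreover have "sym E \<longrightarrow> (\<forall>i\<in>V. (c(v := if c u = C0 then C1 else C0)) i \<noteq> C2)"
      using sym by auto
    ultimately show ?thesis using v(1) by (auto simp: insert_absorb)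
  next
    case False
    show ?thesis
    proof (cases "V = {}")
      case True
      then show ?thesis unfolding admissible_colouring_def by blast
    next
      case nonempty: False
      from False have "\<forall>v\<in>V. \<not> has_in_neighbours (V - {v}) E" by blast
      then obtain q where "inj_on q V" "\<forall>i\<in>V. {j\<in>V. j \<noteq> i \<and> (j, i) \<in> E} = {q i}"
        using unique_in_neighbour_if_minimal[OF psubset.hyps psubset.prems] by blast
      then interpret unique_in_neighbours V E q by unfold_locales
      obtain v where "v \<in> V" using nonempty by blast
      show ?thesis by (rule admissible_colouring_from_smaller[OF psubset.IH \<open>v \<in> V\<close>])
    qed
  qed
qed

lemma admissible_colouring_dominating:
  assumes "has_in_neighbours V E" "v \<in> V" "\<forall>u\<in>V - {v}. (v, u) \<in> E"
  shows "admissible_colouring V E (\<lambda>i. if i = v then C0 else C1)"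
  using assms unfolding has_in_neighbours_def admissible_colouring_def by fastforce

lemma full_out_degree_imp_arc:
  fixes G :: "('n::finite \<times> 'n) set"
  assumes "(v, v) \<notin> G" "card {u. (v, u) \<in> G} = card (UNIV :: 'n set) - 1" "u \<noteq> v"
  shows "(v, u) \<in> G"
proof -
  have "{u. (v, u) \<in> G} \<subseteq> UNIV - {v}" using assms(1) by auto
  moreover have "card (UNIV - {v}) = card (UNIV :: 'n set) - 1" by (simp add: card_Diff_singleton)
  ultimately have "{u. (v, u) \<in> G} = UNIV - {v}"
    using assms(2) by (metis card_subset_eq finite)
  then show ?thesis using assms(3) by auto
qed

text \<open>The configuration \<open>\<lambda>i. c i \<noteq> C0\<close> is reached from every start: a vertex of colour
  \<open>C0\<close> switches off as soon as an in-neighbour is on, the other vertices switch on as soon as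
  an in-neighbour has its final value, and stay on.\<close>
definition colour_network :: "('n \<Rightarrow> colour) \<Rightarrow> ('n \<times> 'n) set \<Rightarrow> ('n \<Rightarrow> bool) \<Rightarrow> ('n \<Rightarrow> bool)" where
  "colour_network c G x i =
     (if c i = C0 then \<not> x i \<and> (\<forall>j. (j, i) \<in> G \<longrightarrow> \<not> x j)
      else x i \<or> (\<exists>j. (j, i) \<in> G \<and> x j = (c j \<noteq> C0)))"

lemma colour_network_cong:
  assumes "\<And>k. k = i \<or> (k, i) \<in> G \<Longrightarrow> x k = y k"
  shows "colour_network c G x i = colour_network c G y i"
  using assms unfolding colour_network_def by (smt (verit))

lemma interaction_graph_colour_network:
  assumes loopless: "\<forall>v. (v, v) \<notin> G"
  shows "interaction_graph (colour_network c G) = add_loops G"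
proof (intro set_eqI iffI; clarify)
  fix j i
  assume "(j, i) \<in> interaction_graph (colour_network c G)"
  then obtain x where "colour_network c G x i \<noteq> colour_network c G (x(j := \<not> x j)) i"
    unfolding interaction_graph_def by blast
  moreover have "colour_network c G x i = colour_network c G (x(j := \<not> x j)) i"
    if "j \<noteq> i" "(j, i) \<notin> G"
    using that by (intro colour_network_cong) auto
  ultimately have "j = i \<or> (j, i) \<in> G" by blast
  then show "(j, i) \<in> add_loops G" unfolding add_loops_def by auto
next
  fix j i
  assume "(j, i) \<in> add_loops G"
  then have ji: "j = i \<or> (j, i) \<in> G" unfolding add_loops_def by auto
  let ?x = "\<lambda>k. c i \<noteq> C0 \<and> k \<noteq> i \<and> c k = C0"
  have "colour_network c G ?x i \<noteq> colour_network c G (?x(j := \<not> ?x j)) i"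
    using ji loopless unfolding colour_network_def by auto
  then show "(j, i) \<in> interaction_graph (colour_network c G)"
    unfolding interaction_graph_def by blast
qed

lemma colour_network_stays_on: "c i \<noteq> C0 \<Longrightarrow> x i \<Longrightarrow> colour_network c G x i"
  by (simp add: colour_network_def)

lemma colour_network_C0_on: "c i = C0 \<Longrightarrow> colour_network c G x i \<Longrightarrow> \<not> x i"
  by (simp add: colour_network_def)

lemma colour_network_C0_off:
  "c i = C0 \<Longrightarrow> (j, i) \<in> G \<Longrightarrow> c j \<noteq> C0 \<Longrightarrow> x j \<Longrightarrow> \<not> colour_network c G x i"
  by (auto simp: colour_network_def)

lemma colour_network_switch_on:
  "c i \<noteq> C0 \<Longrightarrow> (j, i) \<in> G \<Longrightarrow> x j = (c j \<noteq> C0) \<Longrightarrow> colour_network c G x i"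
  by (auto simp: colour_network_def)

context
  fixes c :: "'n \<Rightarrow> colour" and G :: "('n \<times> 'n) set"
  assumes c: "admissible_colouring UNIV G c"
begin

private abbreviation "f \<equiv> colour_network c G"

text \<open>A \<open>C1\<close>-vertex \<open>i\<close> with \<open>C0\<close>-in-neighbour \<open>a\<close>: if \<open>i\<close> is off after one step,
  then so was \<open>a\<close>, which makes \<open>i\<close> switch on in the second step.\<close>
lemma colour_network_C1_on_after_2: "c i = C1 \<Longrightarrow> f (f x) i"
proof -
  assume ci: "c i = C1"
  then obtain a where a: "(a, i) \<in> G" "c a = C0"
    using c unfolding admissible_colouring_def by fastforce
  show "f (f x) i"
  proof (cases "f x i")
    case True
    then show ?thesis using ci by (simp add: colour_network_stays_on)
  next
    case False
    then have "\<not> f x a"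
      using ci a colour_network_C0_on[of c a G x] colour_network_switch_on[of c i a G x] by auto
    then show ?thesis using ci a by (intro colour_network_switch_on) auto
  qed
qed

lemma colour_network_on_after_3: "c i \<noteq> C0 \<Longrightarrow> f (f (f x)) i"
proof (cases "c i")
  case C1
  then show ?thesis using colour_network_C1_on_after_2[of i "f x"] by simp
next
  case C2
  then obtain b where "(b, i) \<in> G" "c b = C1"
    using c unfolding admissible_colouring_def by fastforce
  then show ?thesis
    using C2 colour_network_C1_on_after_2[of b x] by (intro colour_network_switch_on) auto
qed simp

lemma colour_network_C0_off_after_4: "c i = C0 \<Longrightarrow> \<not> f (f (f (f x))) i"
proof -
  assume ci: "c i = C0"
  then obtain j where j: "(j, i) \<in> G" "c j \<noteq> C0"
    using c unfolding admissible_colouring_def by fastforce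
  have "f (f (f x)) j" using j(2) by (rule colour_network_on_after_3)
  then show ?thesis by (rule colour_network_C0_off[OF ci j])
qed

lemma colour_network_C0_off_after_3:
  assumes no_C2: "\<forall>i. c i \<noteq> C2"
  shows "c i = C0 \<Longrightarrow> \<not> f (f (f x)) i"
proof -
  assume ci: "c i = C0"
  then obtain j where j: "(j, i) \<in> G" "c j \<noteq> C0"
    using c unfolding admissible_colouring_def by fastforce
  then have "c j = C1" using no_C2 by (cases "c j") auto
  then have "f (f x) j" by (rule colour_network_C1_on_after_2)
  then show ?thesis by (rule colour_network_C0_off[OF ci j])
qed

lemma colour_network_power_4: "(f ^^ 4) x = (\<lambda>i. c i \<noteq> C0)"
proof -
  have "(f ^^ 4) x = f (f (f (f x)))" by (simp add: numeral_eq_Suc)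
  then show ?thesis
    using colour_network_on_after_3[of _ "f x"] colour_network_C0_off_after_4 by auto
qed

lemma colour_network_power_3:
  assumes "\<forall>i. c i \<noteq> C2"
  shows "(f ^^ 3) x = (\<lambda>i. c i \<noteq> C0)"
proof -
  have "(f ^^ 3) x = f (f (f x))" by (simp add: numeral_eq_Suc)
  then show ?thesis
    using colour_network_on_after_3[of _ x] colour_network_C0_off_after_3[OF assms] by auto
qed

end

lemma nilpotent_class_leI: "(\<And>x. (f ^^ k) x = y) \<Longrightarrow> nilpotent_class_le f k"
  unfolding nilpotent_class_le_def by blast

theorem theorem6:
  fixes G :: "('n::finite \<times> 'n) set"
  assumes loopless: "\<forall>v. (v, v) \<notin> G"
    and indeg: "\<forall>i. card {j. (j, i) \<in> G} \<ge> 1"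
  shows "(\<exists>f. admits (add_loops G) f \<and> nilpotent_class_le f 4)
       \<and> ((sym G \<or> (\<exists>v. card {u. (v, u) \<in> G} = card (UNIV :: 'n set) - 1))
            \<longrightarrow> (\<exists>f. admits (add_loops G) f \<and> nilpotent_class_le f 3))"
proof -
  have admits: "admits (add_loops G) (colour_network c G)" for c
    unfolding admits_def by (rule interaction_graph_colour_network[OF loopless])
  have in_nbrs: "has_in_neighbours UNIV G"
    unfolding has_in_neighbours_def
  proof
    fix i :: 'n
    have "{j. (j, i) \<in> G} \<noteq> {}" using indeg by (metis card.empty not_one_le_zero)
    then obtain j where "(j, i) \<in> G" by blast
    moreover have "j \<noteq> i" using loopless calculation by blast
    ultimately show "\<exists>j\<in>UNIV. j \<noteq> i \<and> (j, i) \<in> G" by blast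
  qed
  then obtain c where c: "admissible_colouring UNIV G c" and sym: "sym G \<longrightarrow> (\<forall>i. c i \<noteq> C2)"
    using admissible_colouring_exists[OF finite_UNIV in_nbrs] by blast
  have "nilpotent_class_le (colour_network c G) 4"
    by (rule nilpotent_class_leI) (rule colour_network_power_4[OF c])
  then have class_4: "\<exists>f. admits (add_loops G) f \<and> nilpotent_class_le f 4"
    using admits by blast
  have class_3: "\<exists>f. admits (add_loops G) f \<and> nilpotent_class_le f 3"
    if "admissible_colouring UNIV G c'" "\<forall>i. c' i \<noteq> C2" for c'
  proof -
    have "nilpotent_class_le (colour_network c' G) 3"
      by (rule nilpotent_class_leI) (rule colour_network_power_3[OF that])
    then show ?thesis using admits by blast
  qed
  have "\<exists>f. admits (add_loops G) f \<and> nilpotent_class_le f 3"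
    if "sym G \<or> (\<exists>v. card {u. (v, u) \<in> G} = card (UNIV :: 'n set) - 1)"
    using that
  proof (elim disjE exE)
    assume "sym G"
    then show ?thesis using class_3 c sym by blast
  next
    fix v assume "card {u. (v, u) \<in> G} = card (UNIV :: 'n set) - 1"
    then have "\<forall>u\<in>UNIV - {v}. (v, u) \<in> G"
      using loopless full_out_degree_imp_arc[of v G] by blast
    then have "admissible_colouring UNIV G (\<lambda>i. if i = v then C0 else C1)"
      by (intro admissible_colouring_dominating[OF in_nbrs]) auto
    then show ?thesis by (rule class_3) simp
  qed
  with class_4 show ?thesis by blast
qed

end
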